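(* Let $n \ge 5$ and let $S$ be a set of transpositions generating $S_n$. Let $G$ be the automorphism group of the Cayley graph $X = \mathrm{Cay}(S_n,S)$, let $G_e$ be the stabilizer in $G$ of the identity vertex $e$, and let $L_e$ be the subgroup of $G_e$ consisting of the automorphisms that fix $e$ and each of its neighbors. Then $G_e = L_e \rtimes \mathrm{Aut}(S_n,S)$, i.e. $G_e = L_e \,\mathrm{Aut}(S_n,S)$ with $L_e$ normal in $G_e$ and $L_e \cap \mathrm{Aut}(S_n,S) = 1$.
   Context: The Cayley graph $\mathrm{Cay}(S_n,S)$ has vertex set $S_n$ and edge set $\{\{h, sh\} : h \in S_n, s \in S\}$; the neighbors of $e$ are exactly the elements of $S$. $\mathrm{Aut}(S_n,S)$ denotes the group of group automorphisms $\phi$ of $S_n$ with $\phi(S) = S$; each such $\phi$ is a permutation of $S_n$ that fixes $e$ and is an automorphism of $\mathrm{Cay}(S_n,S)$, so $\mathrm{Aut}(S_n,S)$ is regarded as a subgroup of $G_e$. *)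

theory Defs
  imports "HOL-Algebra.Sym_Groups" "HOL-Algebra.Bij"
begin

definition transpositions :: "nat \<Rightarrow> (nat \<Rightarrow> nat) set" where
  "transpositions n = {transpose a b | a b. a \<in> {1..n} \<and> b \<in> {1..n} \<and> a \<noteq> b}"

definition cay_adj :: "nat \<Rightarrow> (nat \<Rightarrow> nat) set \<Rightarrow> (nat \<Rightarrow> nat) \<Rightarrow> (nat \<Rightarrow> nat) \<Rightarrow> bool" where
  "cay_adj n S g h \<longleftrightarrow> g \<in> carrier (sym_group n) \<and> h \<in> carrier (sym_group n) \<and>
     (\<exists>s\<in>S. h = s \<otimes>\<^bsub>sym_group n\<^esub> g \<or> g = s \<otimes>\<^bsub>sym_group n\<^esub> h)"

definition cay_aut :: "nat \<Rightarrow> (nat \<Rightarrow> nat) set \<Rightarrow> ((nat \<Rightarrow> nat) \<Rightarrow> (nat \<Rightarrow> nat)) set" where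
  "cay_aut n S = {\<phi> \<in> carrier (BijGroup (carrier (sym_group n))).
     \<forall>g\<in>carrier (sym_group n). \<forall>h\<in>carrier (sym_group n).
        cay_adj n S g h \<longleftrightarrow> cay_adj n S (\<phi> g) (\<phi> h)}"

definition cay_stab :: "nat \<Rightarrow> (nat \<Rightarrow> nat) set \<Rightarrow> ((nat \<Rightarrow> nat) \<Rightarrow> (nat \<Rightarrow> nat)) set" where
  "cay_stab n S = {\<phi> \<in> cay_aut n S. \<phi> \<one>\<^bsub>sym_group n\<^esub> = \<one>\<^bsub>sym_group n\<^esub>}"

definition cay_L :: "nat \<Rightarrow> (nat \<Rightarrow> nat) set \<Rightarrow> ((nat \<Rightarrow> nat) \<Rightarrow> (nat \<Rightarrow> nat)) set" where
  "cay_L n S = {\<phi> \<in> cay_stab n S.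
     \<forall>h. cay_adj n S \<one>\<^bsub>sym_group n\<^esub> h \<longrightarrow> \<phi> h = h}"

definition aut_SnS :: "nat \<Rightarrow> (nat \<Rightarrow> nat) set \<Rightarrow> ((nat \<Rightarrow> nat) \<Rightarrow> (nat \<Rightarrow> nat)) set" where
  "aut_SnS n S = {\<phi> \<in> auto (sym_group n). \<phi> ` S = S}"

end

theory Submission
  imports Defs "HOL-Algebra.Group_Action"
begin

text \<open>
Every automorphism \<open>\<phi>\<close> of \<open>X\<close> fixing \<open>e\<close> permutes the neighbourhood \<open>S\<close> of \<open>e\<close>, and the
common neighbours of two vertices are respected by \<open>\<phi>\<close>. These common neighbours detect
the supports of the transpositions in \<open>S\<close>: two of them are disjoint iff they have exactly two
common neighbours, and three pairwise overlapping ones have no common point iff they form a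
triangle \<open>u = s t s\<close>, which shows up as \<open>N(s) \<inter> N(t) = N(s) \<inter> N(u)\<close> of size three. So \<open>\<phi>\<close>
preserves which triples of supports share a point, and a Whitney-type argument on the
transposition graph (connected, as \<open>S\<close> generates \<open>S\<^sub>n\<close>) yields a permutation \<open>\<sigma>\<close> of
\<open>{1..n}\<close> with \<open>\<phi> s = \<sigma> s \<sigma>\<inverse>\<close> on \<open>S\<close>. Conjugation by \<open>\<sigma>\<close> lies in \<open>Aut(S\<^sub>n,S)\<close> and agrees
with \<open>\<phi>\<close> on \<open>S\<close>, so \<open>\<phi> \<in> L\<^sub>e Aut(S\<^sub>n,S)\<close>. Normality holds because \<open>L\<^sub>e\<close> is the kernel of
the action of \<open>G\<^sub>e\<close> on \<open>S\<close>, and the intersection is trivial because a group automorphism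
fixing a generating set is the identity.
\<close>


lemma card_2_Int_unique:
  assumes "card A = 2" "card B = 2" "A \<noteq> B" "x \<in> A \<inter> B" "y \<in> A \<inter> B"
  shows "x = y"
  using assms by (auto simp: card_2_iff)

lemma card_2_obtain_other:
  assumes "card A = 2" "x \<in> A"
  obtains y where "y \<noteq> x" "A = {x, y}"
  using assms by (auto simp: card_2_iff doubleton_eq_iff) (metis insert_commute)

lemma card_2_Int3_empty_iff_triangle:
  assumes "card A = 2" "card B = 2" "card C = 2" "A \<noteq> B"
    and "A \<inter> B \<noteq> {}" "A \<inter> C \<noteq> {}" "B \<inter> C \<noteq> {}"
  shows "A \<inter> B \<inter> C = {} \<longleftrightarrow> C = sym_diff A B"
proof
  assume empty: "A \<inter> B \<inter> C = {}"
  obtain x where x: "x \<in> A" "x \<in> B" using assms(5) by blast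
  obtain a where a: "a \<noteq> x" "A = {x, a}" using card_2_obtain_other[OF assms(1) x(1)] .
  obtain b where b: "b \<noteq> x" "B = {x, b}" using card_2_obtain_other[OF assms(2) x(2)] .
  have "a \<noteq> b" using a b assms(4) by auto
  moreover have "a \<in> C" "b \<in> C" using assms(6,7) a b x empty by blast+
  ultimately have "C = {a, b}" using assms(3) by (auto simp: card_2_iff)
  then show "C = sym_diff A B" using a b \<open>a \<noteq> b\<close> by auto
qed auto

section \<open>Edge bijections preserving stars\<close>

locale star_preserving_edge_bij =
  fixes V :: "'a set" and E :: "'a set set" and F :: "'a set \<Rightarrow> 'a set"
  assumes card_edge: "e \<in> E \<Longrightarrow> card e = 2"
    and edge_subset: "e \<in> E \<Longrightarrow> e \<subseteq> V"
    and vertex_covered: "v \<in> V \<Longrightarrow> \<exists>e\<in>E. v \<in> e"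
    and no_isolated_edge: "e \<in> E \<Longrightarrow> \<exists>e'\<in>E. e' \<noteq> e \<and> e \<inter> e' \<noteq> {}"
    and bij_F: "bij_betw F E E"
    and Int3_empty_iff: "\<lbrakk>e1 \<in> E; e2 \<in> E; e3 \<in> E\<rbrakk> \<Longrightarrow> e1 \<inter> e2 \<inter> e3 = {} \<longleftrightarrow> F e1 \<inter> F e2 \<inter> F e3 = {}"
begin

lemma F_in: "e \<in> E \<Longrightarrow> F e \<in> E"
  using bij_F bij_betwE by blast

lemma F_eq_iff: "\<lbrakk>e \<in> E; e' \<in> E\<rbrakk> \<Longrightarrow> F e = F e' \<longleftrightarrow> e = e'"
  using bij_F by (auto simp: bij_betw_def inj_on_def)

lemma Int_empty_iff: "\<lbrakk>e \<in> E; e' \<in> E\<rbrakk> \<Longrightarrow> e \<inter> e' = {} \<longleftrightarrow> F e \<inter> F e' = {}"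
  using Int3_empty_iff[of e e' e'] by simp

definition branching :: "'a \<Rightarrow> bool" where
  "branching v \<longleftrightarrow> (\<exists>e\<in>E. \<exists>e'\<in>E. e \<noteq> e' \<and> v \<in> e \<and> v \<in> e')"

lemma branching_other_edge:
  assumes "branching v" "e \<in> E" "v \<in> e"
  obtains e' where "e' \<in> E" "e' \<noteq> e" "v \<in> e'"
  using assms unfolding branching_def by blast

lemma branching_image_common_point:
  assumes "branching v"
  shows "\<exists>!w. \<forall>e\<in>E. v \<in> e \<longrightarrow> w \<in> F e"
proof -
  obtain e1 e2 where e12: "e1 \<in> E" "e2 \<in> E" "e1 \<noteq> e2" "v \<in> e1" "v \<in> e2"
    using assms unfolding branching_def by blast
  obtain w where w: "w \<in> F e1 \<inter> F e2"
    using Int_empty_iff[OF e12(1,2)] e12(4,5) by blast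
  have unique: "y = w" if "y \<in> F e1 \<inter> F e2" for y
    using card_2_Int_unique[OF card_edge card_edge, OF F_in F_in] e12 F_eq_iff w that by blast
  have "w \<in> F e" if "e \<in> E" "v \<in> e" for e
  proof -
    have "F e1 \<inter> F e2 \<inter> F e \<noteq> {}"
      using Int3_empty_iff[OF e12(1,2) that(1)] e12(4,5) that(2) by blast
    then show ?thesis using unique by blast
  qed
  with unique show ?thesis by (intro ex1I[of _ w]) (use e12 in blast)+
qed

definition centre :: "'a \<Rightarrow> 'a" where
  "centre v = (THE w. \<forall>e\<in>E. v \<in> e \<longrightarrow> w \<in> F e)"

lemma centre_in_image: "\<lbrakk>branching v; e \<in> E; v \<in> e\<rbrakk> \<Longrightarrow> centre v \<in> F e"
  unfolding centre_def using theI'[OF branching_image_common_point] by blast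

lemma centre_neq:
  assumes e: "e \<in> E" "v \<in> e" "u \<in> e" "v \<noteq> u" and branching: "branching v" "branching u"
  shows "centre v \<noteq> centre u"
proof
  assume eq: "centre v = centre u"
  obtain ev where ev: "ev \<in> E" "ev \<noteq> e" "v \<in> ev" using branching_other_edge[OF branching(1) e(1,2)] .
  obtain eu where eu: "eu \<in> E" "eu \<noteq> e" "u \<in> eu" using branching_other_edge[OF branching(2) e(1,3)] .
  have "centre v \<in> F e \<inter> F ev \<inter> F eu"
    using centre_in_image[OF branching(1) e(1,2)] centre_in_image[OF branching(1) ev(1,3)]
      centre_in_image[OF branching(2) eu(1,3)] eq by simp
  then obtain y where y: "y \<in> e" "y \<in> ev" "y \<in> eu" using Int3_empty_iff[OF e(1) ev(1) eu(1)] by blast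
  have "y = v" using card_2_Int_unique[OF card_edge card_edge, OF e(1) ev(1)] ev y e by blast
  then show False using card_2_Int_unique[OF card_edge card_edge, OF e(1) eu(1)] eu y e by blast
qed

text \<open>A vertex \<open>v\<close> lying on a single edge \<open>{v, u}\<close> goes to the endpoint of \<open>F {v, u}\<close> other than
  \<open>centre u\<close>; the neighbour \<open>u\<close> is branching because no edge is isolated.\<close>

definition vertex_map :: "'a \<Rightarrow> 'a" where
  "vertex_map v = (if branching v then centre v
     else THE w. \<forall>e\<in>E. v \<in> e \<longrightarrow> F e = insert w (centre ` (e - {v})))"

lemma image_edge_at_leaf:
  assumes e: "e \<in> E" "e = {v, u}" "v \<noteq> u" and leaf: "\<not> branching v"
  shows "branching u" "F e = {vertex_map v, centre u}"
proof -
  have vu: "v \<in> e" "u \<in> e" using e(2) by auto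
  have only_e: "e' = e" if "e' \<in> E" "v \<in> e'" for e'
    using leaf that e(1) vu(1) unfolding branching_def by blast
  obtain e' where e': "e' \<in> E" "e' \<noteq> e" "e \<inter> e' \<noteq> {}" using no_isolated_edge[OF e(1)] by blast
  have "v \<notin> e'" using only_e e' by blast
  then have "u \<in> e'" using e'(3) unfolding e(2) by blast
  then show u: "branching u" unfolding branching_def using e(1) e'(1,2) vu(2) by blast
  obtain y where y: "y \<noteq> centre u" "F e = {centre u, y}"
    using card_2_obtain_other[OF card_edge[OF F_in[OF e(1)]] centre_in_image[OF u e(1) vu(2)]] .
  have e_minus: "e - {v} = {u}" using e by auto
  have "(THE w. \<forall>e'\<in>E. v \<in> e' \<longrightarrow> F e' = insert w (centre ` (e' - {v}))) = y"
  proof (rule the_equality)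
    have "F e = insert y (centre ` (e - {v}))" using y(2) e_minus by auto
    then show "\<forall>e'\<in>E. v \<in> e' \<longrightarrow> F e' = insert y (centre ` (e' - {v}))"
      using only_e by blast
    show "w = y" if "\<forall>e'\<in>E. v \<in> e' \<longrightarrow> F e' = insert w (centre ` (e' - {v}))" for w
    proof -
      have "{w, centre u} = {centre u, y}" using that e(1) e(2) e_minus y(2) by auto
      then show ?thesis using y(1) by (auto simp: doubleton_eq_iff)
    qed
  qed
  then show "F e = {vertex_map v, centre u}"
    using y leaf unfolding vertex_map_def by auto
qed

lemma F_eq_image: assumes "e \<in> E" shows "F e = vertex_map ` e"
proof -
  obtain v u where e: "e = {v, u}" "v \<noteq> u" using card_edge[OF assms] by (auto simp: card_2_iff)
  consider "branching v" "branching u" | "\<not> branching v" | "\<not> branching u" by blast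
  then show ?thesis
  proof cases
    case 1
    then have "centre v \<in> F e" "centre u \<in> F e" "centre v \<noteq> centre u"
      using centre_in_image centre_neq assms e by auto
    then have "F e = {centre v, centre u}"
      using card_edge[OF F_in[OF assms]] by (auto simp: card_2_iff)
    then show ?thesis using 1 e unfolding vertex_map_def by auto
  next
    case 2
    note leaf = image_edge_at_leaf[OF assms e 2]
    have "vertex_map u = centre u" using leaf(1) by (simp add: vertex_map_def)
    then show ?thesis using leaf(2) e by simp
  next
    case 3
    have e': "e = {u, v}" "u \<noteq> v" using e by auto
    note leaf = image_edge_at_leaf[OF assms e' 3]
    have "vertex_map v = centre v" using leaf(1) e by (simp add: vertex_map_def)
    then show ?thesis using leaf(2) e by (simp add: insert_commute)
  qed
qed

lemma inj_on_vertex_map: "inj_on vertex_map V"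
proof (rule inj_onI, rule ccontr)
  fix v u assume v: "v \<in> V" and u: "u \<in> V" and eq: "vertex_map v = vertex_map u" and "v \<noteq> u"
  have not_both: "\<not> (v \<in> e \<and> u \<in> e)" if "e \<in> E" for e
  proof
    assume "v \<in> e \<and> u \<in> e"
    then have "e = {v, u}" using card_edge[OF that] \<open>v \<noteq> u\<close> by (auto simp: card_2_iff)
    then have "F e = {vertex_map v}" using F_eq_image[OF that] eq by auto
    then show False using card_edge[OF F_in[OF that]] by simp
  qed
  obtain ev where ev: "ev \<in> E" "v \<in> ev" using vertex_covered[OF v] by blast
  obtain eu where eu: "eu \<in> E" "u \<in> eu" using vertex_covered[OF u] by blast
  have "F ev \<inter> F eu \<noteq> {}" using F_eq_image ev eu eq by auto
  then obtain y where y: "y \<in> ev" "y \<in> eu" using Int_empty_iff[OF ev(1) eu(1)] by blast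
  have "y \<noteq> v" "y \<noteq> u" using not_both ev eu y by blast+
  then have "ev = {v, y}" "eu = {u, y}"
    using card_edge ev eu y by (auto simp: card_2_iff doubleton_eq_iff)
  then have "F ev = F eu" using F_eq_image ev eu eq by simp
  then show False using F_eq_iff ev eu not_both by blast
qed

lemma vertex_map_surj: "vertex_map ` V = V"
proof
  show "vertex_map ` V \<subseteq> V"
    using vertex_covered F_eq_image F_in edge_subset by blast
  show "V \<subseteq> vertex_map ` V"
  proof
    fix w assume "w \<in> V"
    then obtain e where e: "e \<in> E" "w \<in> e" using vertex_covered by blast
    then obtain e0 where "e0 \<in> E" "e = F e0" using bij_F by (auto simp: bij_betw_def)
    then show "w \<in> vertex_map ` V" using e F_eq_image edge_subset by blast
  qed
qed

theorem induced_by_vertex_bij: "\<exists>\<sigma>. bij_betw \<sigma> V V \<and> (\<forall>e\<in>E. F e = \<sigma> ` e)"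
  using inj_on_vertex_map vertex_map_surj F_eq_image by (auto simp: bij_betw_def)

end

lemma BijGroup_mult_apply:
  "\<lbrakk>\<phi> \<in> Bij A; \<psi> \<in> Bij A; x \<in> A\<rbrakk> \<Longrightarrow> (\<phi> \<otimes>\<^bsub>BijGroup A\<^esub> \<psi>) x = \<phi> (\<psi> x)"
  by (simp add: BijGroup_def compose_def)

lemma BijGroup_inv_apply:
  assumes "\<phi> \<in> Bij A" "x \<in> A"
  shows "(inv\<^bsub>BijGroup A\<^esub> \<phi>) (\<phi> x) = x" "\<phi> ((inv\<^bsub>BijGroup A\<^esub> \<phi>) x) = x"
  using assms by (auto simp: inv_BijGroup Bij_def bij_betw_def f_inv_into_f)

lemma BijGroup_mult_inv_fixes:
  assumes "\<phi> \<in> Bij A" "\<psi> \<in> Bij A" "X \<subseteq> A" "\<psi> ` X = X" "\<forall>y\<in>X. \<phi> y = \<psi> y" "x \<in> X"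
  shows "(\<phi> \<otimes>\<^bsub>BijGroup A\<^esub> inv\<^bsub>BijGroup A\<^esub> \<psi>) x = x"
proof -
  obtain y where y: "y \<in> X" "x = \<psi> y" using assms(4,6) by blast
  have "inv\<^bsub>BijGroup A\<^esub> \<psi> \<in> Bij A"
    using group.inv_closed[OF group_BijGroup] assms(2) by (simp add: BijGroup_def)
  then have "(\<phi> \<otimes>\<^bsub>BijGroup A\<^esub> inv\<^bsub>BijGroup A\<^esub> \<psi>) x = \<phi> ((inv\<^bsub>BijGroup A\<^esub> \<psi>) (\<psi> y))"
    using BijGroup_mult_apply[OF assms(1)] Bij_imp_funcset[OF assms(2)] assms(3) y by blast
  also have "\<dots> = x" using BijGroup_inv_apply(1)[OF assms(2)] assms(3,5) y by auto
  finally show ?thesis .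
qed

lemma subgroup_BijGroup_preserving:
  "subgroup {\<phi> \<in> Bij A. \<forall>x\<in>A. \<forall>y\<in>A. R x y \<longleftrightarrow> R (\<phi> x) (\<phi> y)} (BijGroup A)"
  (is "subgroup ?H _")
proof (rule group.subgroupI[OF group_BijGroup])
  show "?H \<subseteq> carrier (BijGroup A)" by (auto simp: BijGroup_def)
  show "?H \<noteq> {}" using id_Bij[of A] by auto
next
  fix \<phi> assume \<phi>: "\<phi> \<in> ?H"
  then have "inv\<^bsub>BijGroup A\<^esub> \<phi> \<in> Bij A" using restrict_inv_into_Bij by (auto simp: inv_BijGroup)
  moreover have "(inv\<^bsub>BijGroup A\<^esub> \<phi>) x \<in> A" if "x \<in> A" for x
    using \<phi> that Bij_inv_into_mem by (auto simp: inv_BijGroup)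
  ultimately show "inv\<^bsub>BijGroup A\<^esub> \<phi> \<in> ?H"
    using \<phi> BijGroup_inv_apply(2)[of \<phi> A] by auto
next
  fix \<phi> \<psi> assume \<phi>: "\<phi> \<in> ?H" and \<psi>: "\<psi> \<in> ?H"
  have \<psi>A: "\<psi> x \<in> A" if "x \<in> A" for x using \<psi> that Bij_imp_funcset by blast
  have B: "\<phi> \<in> Bij A" "\<psi> \<in> Bij A" using \<phi> \<psi> by auto
  have "\<phi> \<otimes>\<^bsub>BijGroup A\<^esub> \<psi> \<in> Bij A" using compose_Bij[OF B] B by (simp add: BijGroup_def)
  then show "\<phi> \<otimes>\<^bsub>BijGroup A\<^esub> \<psi> \<in> ?H"
    using \<phi> \<psi> \<psi>A by (simp add: BijGroup_mult_apply)
qed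

lemma subgroup_BijGroup_pointwise_stabiliser:
  assumes H: "subgroup H (BijGroup A)" and "X \<subseteq> A"
  shows "subgroup {\<phi> \<in> H. \<forall>x\<in>X. \<phi> x = x} (BijGroup A)" (is "subgroup ?K _")
proof (rule group.subgroupI[OF group_BijGroup])
  have HB: "\<phi> \<in> Bij A" if "\<phi> \<in> H" for \<phi> using subgroup.subset[OF H] that by (auto simp: BijGroup_def)
  show "?K \<subseteq> carrier (BijGroup A)" using subgroup.subset[OF H] by blast
  have "\<one>\<^bsub>BijGroup A\<^esub> \<in> ?K" using subgroup.one_closed[OF H] \<open>X \<subseteq> A\<close> by (auto simp: BijGroup_def)
  then show "?K \<noteq> {}" by blast
  show "inv\<^bsub>BijGroup A\<^esub> \<phi> \<in> ?K" if "\<phi> \<in> ?K" for \<phi>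
  proof -
    have "(inv\<^bsub>BijGroup A\<^esub> \<phi>) x = x" if "x \<in> X" for x
      using BijGroup_inv_apply(1)[OF HB, of \<phi> x] \<open>\<phi> \<in> ?K\<close> \<open>X \<subseteq> A\<close> that by auto
    then show ?thesis using subgroup.m_inv_closed[OF H] \<open>\<phi> \<in> ?K\<close> by blast
  qed
  show "\<phi> \<otimes>\<^bsub>BijGroup A\<^esub> \<psi> \<in> ?K" if "\<phi> \<in> ?K" "\<psi> \<in> ?K" for \<phi> \<psi>
  proof -
    have "(\<phi> \<otimes>\<^bsub>BijGroup A\<^esub> \<psi>) x = x" if "x \<in> X" for x
      using BijGroup_mult_apply[OF HB HB, of \<phi> \<psi> x] that \<open>\<phi> \<in> ?K\<close> \<open>\<psi> \<in> ?K\<close> \<open>X \<subseteq> A\<close> by auto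
    then show ?thesis using subgroup.m_closed[OF H] that by blast
  qed
qed

lemma normal_pointwise_stabiliser:
  assumes H: "subgroup H (BijGroup A)" and X: "X \<subseteq> A" and stable: "\<And>\<phi>. \<phi> \<in> H \<Longrightarrow> \<phi> ` X \<subseteq> X"
  shows "{\<phi> \<in> H. \<forall>x\<in>X. \<phi> x = x} \<lhd> BijGroup A\<lparr>carrier := H\<rparr>" (is "?K \<lhd> _")
proof -
  interpret B: group "BijGroup A" by (rule group_BijGroup)
  have K: "subgroup ?K (BijGroup A)" by (rule subgroup_BijGroup_pointwise_stabiliser[OF H X])
  have HB: "\<phi> \<in> Bij A" if "\<phi> \<in> H" for \<phi> using subgroup.subset[OF H] that by (auto simp: BijGroup_def)
  have conj: "g \<otimes>\<^bsub>BijGroup A\<^esub> k \<otimes>\<^bsub>BijGroup A\<^esub> inv\<^bsub>BijGroup A\<^esub> g \<in> ?K" if g: "g \<in> H" and k: "k \<in> ?K" for g k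
  proof -
    have g': "inv\<^bsub>BijGroup A\<^esub> g \<in> H" using subgroup.m_inv_closed[OF H g] .
    have kH: "k \<in> H" and gk: "g \<otimes>\<^bsub>BijGroup A\<^esub> k \<in> H" using k subgroup.m_closed[OF H g] by auto
    have "(g \<otimes>\<^bsub>BijGroup A\<^esub> k \<otimes>\<^bsub>BijGroup A\<^esub> inv\<^bsub>BijGroup A\<^esub> g) x = x" if x: "x \<in> X" for x
    proof -
      have gx: "(inv\<^bsub>BijGroup A\<^esub> g) x \<in> X" using stable[OF g'] x by blast
      have "(g \<otimes>\<^bsub>BijGroup A\<^esub> k \<otimes>\<^bsub>BijGroup A\<^esub> inv\<^bsub>BijGroup A\<^esub> g) x
          = g (k ((inv\<^bsub>BijGroup A\<^esub> g) x))"
        using BijGroup_mult_apply[OF HB[OF gk] HB[OF g'] subsetD[OF X x]]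
          BijGroup_mult_apply[OF HB[OF g] HB[OF kH] subsetD[OF X gx]] by simp
      also have "\<dots> = x" using k gx BijGroup_inv_apply(2)[OF HB[OF g] subsetD[OF X x]] by simp
      finally show ?thesis .
    qed
    then show ?thesis using subgroup.m_closed[OF H subgroup.m_closed[OF H g] g'] k by auto
  qed
  show ?thesis
  proof (subst group.normal_inv_iff[OF subgroup.subgroup_is_group[OF H B.is_group]], intro conjI ballI)
    show "subgroup ?K (BijGroup A\<lparr>carrier := H\<rparr>)" using B.subgroup_incl[OF K H] by blast
    show "x \<otimes>\<^bsub>BijGroup A\<lparr>carrier := H\<rparr>\<^esub> h \<otimes>\<^bsub>BijGroup A\<lparr>carrier := H\<rparr>\<^esub> inv\<^bsub>BijGroup A\<lparr>carrier := H\<rparr>\<^esub> x \<in> ?K"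
      if "x \<in> carrier (BijGroup A\<lparr>carrier := H\<rparr>)" "h \<in> ?K" for x h
      using that conj B.m_inv_consistent[OF H] by simp
  qed
qed

lemma (in group) conjugation_in_auto:
  assumes g: "g \<in> carrier G"
  shows "(\<lambda>h\<in>carrier G. g \<otimes> h \<otimes> inv g) \<in> auto G"
proof -
  have "(\<lambda>h\<in>carrier G. g \<otimes> h \<otimes> inv g) \<in> hom G G"
  proof (rule homI)
    fix x y assume xy: "x \<in> carrier G" "y \<in> carrier G"
    have cancel: "inv g \<otimes> (g \<otimes> z) = z" if "z \<in> carrier G" for z
      using g that by (simp add: m_assoc[symmetric])
    have "g \<otimes> x \<otimes> inv g \<otimes> (g \<otimes> y \<otimes> inv g) = g \<otimes> (x \<otimes> y) \<otimes> inv g"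
      using g xy by (simp add: m_assoc cancel)
    then show "(\<lambda>h\<in>carrier G. g \<otimes> h \<otimes> inv g) (x \<otimes> y) =
        (\<lambda>h\<in>carrier G. g \<otimes> h \<otimes> inv g) x \<otimes> (\<lambda>h\<in>carrier G. g \<otimes> h \<otimes> inv g) y"
      using xy by simp
  qed (use g in simp)
  moreover have "(\<lambda>h\<in>carrier G. g \<otimes> h \<otimes> inv g) \<in> Bij (carrier G)"
    using conjugation_is_bij[OF g] by (simp add: Bij_def)
  ultimately show ?thesis by (simp add: auto_def)
qed

section \<open>Transpositions\<close>

lemma sym_group_comp_closed:
  "\<lbrakk>g \<in> carrier (sym_group n); h \<in> carrier (sym_group n)\<rbrakk> \<Longrightarrow> g \<circ> h \<in> carrier (sym_group n)"
  by (simp add: sym_group_carrier permutes_compose)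

lemma id_in_sym_group: "id \<in> carrier (sym_group n)"
  by (simp add: sym_group_carrier)

lemma transpose_comp_eq_transpose_comp_disjoint:
  assumes "distinct [p, q, r, w]" "x \<noteq> y"
    and "\<And>z. transpose x y (transpose p q z) = transpose c d (transpose r w z)"
  shows "{x, y} = {p, q} \<or> {x, y} = {r, w}"
  using assms(1,2) assms(3)[of p] assms(3)[of q] assms(3)[of r] assms(3)[of w] assms(3)[of x] assms(3)[of y]
  unfolding transpose_def by (auto split: if_splits)

lemma transpose_comp_eq_transpose_comp_meeting:
  assumes "distinct [p, q, w]" "x \<noteq> y"
    and "\<And>z. transpose x y (transpose p q z) = transpose c d (transpose p w z)"
  shows "{x, y} = {p, q} \<or> {x, y} = {p, w} \<or> {x, y} = {q, w}"
  using assms(1,2) assms(3)[of p] assms(3)[of q] assms(3)[of w] assms(3)[of x] assms(3)[of y]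
  unfolding transpose_def by (auto split: if_splits)

lemma transpose_eq_if_doubleton_eq: "{a, b} = {c, d} \<Longrightarrow> transpose a b = transpose c d"
  by (auto simp: doubleton_eq_iff transpose_commute)

definition moved :: "('a \<Rightarrow> 'a) \<Rightarrow> 'a set" where
  "moved p = {x. p x \<noteq> x}"

lemma moved_transpose: "a \<noteq> b \<Longrightarrow> moved (transpose a b) = {a, b}"
  by (auto simp: moved_def transpose_def)

lemma transpositionsE:
  assumes "s \<in> transpositions n"
  obtains a b where "a \<in> {1..n}" "b \<in> {1..n}" "a \<noteq> b" "s = transpose a b"
  using assms unfolding transpositions_def by blast

lemma transpositions_subset_carrier: "transpositions n \<subseteq> carrier (sym_group n)"
  by (auto simp: transpositions_def sym_group_carrier permutes_swap_id)

lemma transposition_comp_self: "s \<in> transpositions n \<Longrightarrow> s \<circ> s = id"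
  by (auto elim: transpositionsE)

lemma card_moved_transposition: "s \<in> transpositions n \<Longrightarrow> card (moved s) = 2"
  by (auto elim!: transpositionsE simp: moved_transpose)

lemma moved_transposition_subset: "s \<in> transpositions n \<Longrightarrow> moved s \<subseteq> {1..n}"
  by (auto elim!: transpositionsE simp: moved_transpose)

lemma inj_on_moved_transpositions: "inj_on moved (transpositions n)"
  by (rule inj_onI) (auto elim!: transpositionsE simp: moved_transpose intro: transpose_eq_if_doubleton_eq)

lemma transpositions_disjointE:
  assumes "s \<in> transpositions n" "t \<in> transpositions n" "moved s \<inter> moved t = {}"
  obtains p q r w where "distinct [p, q, r, w]" "s = transpose p q" "t = transpose r w"
proof -
  obtain p q r w where "p \<noteq> q" "r \<noteq> w" "s = transpose p q" "t = transpose r w"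
    using assms(1,2) by (auto elim!: transpositionsE)
  with assms(3) show thesis using that[of p q r w] by (auto simp: moved_transpose)
qed

lemma transpositions_meetingE:
  assumes "s \<in> transpositions n" "t \<in> transpositions n" "s \<noteq> t" "moved s \<inter> moved t \<noteq> {}"
  obtains p q w where "distinct [p, q, w]" "{p, q, w} \<subseteq> {1..n}" "s = transpose p q" "t = transpose p w"
proof -
  obtain a b c d where ab: "{a, b, c, d} \<subseteq> {1..n}" "a \<noteq> b" "c \<noteq> d" "s = transpose a b" "t = transpose c d"
    using assms(1,2) by (auto elim!: transpositionsE)
  have "{a, b} \<noteq> {c, d}" using assms(3) ab(4,5) transpose_eq_if_doubleton_eq by metis
  have "{a, b} \<inter> {c, d} \<noteq> {}" using assms(4) ab by (simp add: moved_transpose)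
  then consider "a = c" | "a = d" | "b = c" | "b = d" by blast
  then show thesis
  proof cases
    case 1 then show ?thesis using that[of a b d] ab \<open>{a, b} \<noteq> {c, d}\<close> by auto
  next
    case 2 then show ?thesis using that[of a b c] ab \<open>{a, b} \<noteq> {c, d}\<close> by (auto simp: transpose_commute)
  next
    case 3 then show ?thesis using that[of b a d] ab \<open>{a, b} \<noteq> {c, d}\<close> by (auto simp: transpose_commute)
  next
    case 4 then show ?thesis using that[of b a c] ab \<open>{a, b} \<noteq> {c, d}\<close> by (auto simp: transpose_commute)
  qed
qed

lemma transpositions_disjoint_commute:
  assumes "s \<in> transpositions n" "t \<in> transpositions n" "moved s \<inter> moved t = {}"
  shows "s \<circ> t = t \<circ> s"
proof -
  obtain p q r w where "distinct [p, q, r, w]" "s = transpose p q" "t = transpose r w"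
    using transpositions_disjointE[OF assms] .
  then show ?thesis by (auto simp: fun_eq_iff transpose_def)
qed

lemma transpositions_meeting:
  assumes "s \<in> transpositions n" "t \<in> transpositions n" "s \<noteq> t" "moved s \<inter> moved t \<noteq> {}"
  shows "t \<circ> s \<circ> t = s \<circ> t \<circ> s" "s \<circ> t \<noteq> t \<circ> s" "s \<circ> t \<circ> s \<in> transpositions n"
    "moved (s \<circ> t \<circ> s) = sym_diff (moved s) (moved t)"
proof -
  obtain p q w where pqw: "distinct [p, q, w]" "{p, q, w} \<subseteq> {1..n}" "s = transpose p q" "t = transpose p w"
    using transpositions_meetingE[OF assms] .
  have sts: "s \<circ> t \<circ> s = transpose q w" using pqw by (auto simp: fun_eq_iff transpose_def)
  show "t \<circ> s \<circ> t = s \<circ> t \<circ> s" "s \<circ> t \<noteq> t \<circ> s"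
    using pqw sts by (auto simp: fun_eq_iff transpose_def)
  show "s \<circ> t \<circ> s \<in> transpositions n" using sts pqw by (auto simp: transpositions_def)
  show "moved (s \<circ> t \<circ> s) = sym_diff (moved s) (moved t)" using sts pqw by (auto simp: moved_transpose)
qed

lemma transposition_comp_eq_cases:
  assumes T: "a \<in> transpositions n" "b \<in> transpositions n" "s \<in> transpositions n" "t \<in> transpositions n"
    and "s \<noteq> t" and eq: "a \<circ> s = b \<circ> t"
  shows "a = s \<or> a = t \<or> a = s \<circ> t \<circ> s"
proof -
  obtain x y c d where xy: "x \<noteq> y" "a = transpose x y" "b = transpose c d"
    using T(1,2) by (auto elim!: transpositionsE)
  have pointwise: "transpose x y (s z) = transpose c d (t z)" for z
    using eq xy by (simp add: fun_eq_iff)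
  show ?thesis
  proof (cases "moved s \<inter> moved t = {}")
    case True
    then obtain p q r w where pqrw: "distinct [p, q, r, w]" "s = transpose p q" "t = transpose r w"
      using transpositions_disjointE T(3,4) by blast
    have "{x, y} = {p, q} \<or> {x, y} = {r, w}"
      by (rule transpose_comp_eq_transpose_comp_disjoint[OF pqrw(1) xy(1)]) (use pointwise pqrw in simp)
    then show ?thesis using pqrw xy by (auto intro: transpose_eq_if_doubleton_eq)
  next
    case False
    then obtain p q w where pqw: "distinct [p, q, w]" "s = transpose p q" "t = transpose p w"
      using transpositions_meetingE T(3,4) \<open>s \<noteq> t\<close> by blast
    have "s \<circ> t \<circ> s = transpose q w" using pqw by (auto simp: fun_eq_iff transpose_def)
    moreover have "{x, y} = {p, q} \<or> {x, y} = {p, w} \<or> {x, y} = {q, w}"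
      by (rule transpose_comp_eq_transpose_comp_meeting[OF pqw(1) xy(1)]) (use pointwise pqw in simp)
    ultimately show ?thesis using pqw xy by (auto intro: transpose_eq_if_doubleton_eq)
  qed
qed

lemma bij_conj_transpose:
  assumes "bij \<sigma>" shows "\<sigma> \<circ> transpose a b \<circ> inv' \<sigma> = transpose (\<sigma> a) (\<sigma> b)"
proof -
  have "\<sigma> \<circ> transpose a b = transpose (\<sigma> a) (\<sigma> b) \<circ> \<sigma>"
    using transpose_comp_eq[OF assms, of "\<sigma> a" "\<sigma> b"] inv_f_f[OF bij_is_inj[OF assms]] by simp
  then have "\<sigma> \<circ> transpose a b \<circ> inv' \<sigma> = transpose (\<sigma> a) (\<sigma> b) \<circ> (\<sigma> \<circ> inv' \<sigma>)"
    by (simp add: comp_assoc)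
  also have "\<sigma> \<circ> inv' \<sigma> = id" using surj_iff[THEN iffD1, OF bij_is_surj[OF assms]] .
  finally show ?thesis by (simp only: comp_id)
qed

lemma generate_transpositions_induct:
  assumes S: "S \<subseteq> transpositions n" and g: "g \<in> generate (sym_group n) S"
    and "P id" and "\<And>s. s \<in> S \<Longrightarrow> P s" and "\<And>x y. \<lbrakk>P x; P y\<rbrakk> \<Longrightarrow> P (x \<circ> y)"
  shows "P g"
  using g
proof (induction g rule: generate.induct)
  case (inv h)
  have "inv\<^bsub>sym_group n\<^esub> h = h"
    using transposition_comp_self[of h n] inv S transpositions_subset_carrier
    by (intro group.inv_equality[OF sym_group_is_group]) (auto simp: sym_group_mult sym_group_one)
  then show ?case using assms(4) inv by simp
qed (use assms in \<open>simp_all only: sym_group_one sym_group_mult\<close>)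

lemma generating_transpositions_cover:
  assumes S: "S \<subseteq> transpositions n" and gen: "generate (sym_group n) S = carrier (sym_group n)"
    and n: "n \<ge> 2" and i: "i \<in> {1..n}"
  shows "\<exists>s\<in>S. i \<in> moved s"
proof (rule ccontr)
  assume "\<not> ?thesis"
  then have fixes_i: "s i = i" if "s \<in> S" for s using that by (auto simp: moved_def)
  define j where "j = (if i = 1 then 2 else (1::nat))"
  have j: "j \<in> {1..n}" "j \<noteq> i" using n i by (auto simp: j_def)
  have "transpose i j \<in> generate (sym_group n) S"
    using i j gen by (simp add: sym_group_carrier permutes_swap_id)
  then have "transpose i j i = i"
    by (rule generate_transpositions_induct[OF S, where P = "\<lambda>g. g i = i"]) (auto simp: fixes_i)
  then show False using j by simp
qed

lemma generating_transpositions_no_isolated: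
  assumes S: "S \<subseteq> transpositions n" and gen: "generate (sym_group n) S = carrier (sym_group n)"
    and n: "n \<ge> 3" and s: "s \<in> S"
  shows "\<exists>t\<in>S. t \<noteq> s \<and> moved s \<inter> moved t \<noteq> {}"
proof (rule ccontr)
  assume "\<not> ?thesis"
  then have disjoint: "moved s \<inter> moved t = {}" if "t \<in> S" "t \<noteq> s" for t using that by blast
  obtain a b where ab: "a \<in> {1..n}" "b \<in> {1..n}" "a \<noteq> b" "s = transpose a b"
    using subsetD[OF S s] by (rule transpositionsE)
  have stable: "t a \<in> {a, b} \<and> t b \<in> {a, b}" if "t \<in> S" for t
  proof (cases "t = s")
    case False
    then have "a \<notin> moved t" "b \<notin> moved t" using disjoint[OF that] ab by (auto simp: moved_transpose)
    then show ?thesis by (simp add: moved_def)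
  qed (use ab in simp)
  obtain k where k: "k \<in> {1..n}" "k \<noteq> a" "k \<noteq> b"
  proof -
    have "\<exists>k\<in>{1, 2, 3::nat}. k \<noteq> a \<and> k \<noteq> b" by auto
    then obtain k where "k \<in> {1, 2, 3}" "k \<noteq> a" "k \<noteq> b" by blast
    then show thesis using that[of k] n by auto
  qed
  have "transpose a k \<in> generate (sym_group n) S"
    using ab k gen by (simp add: sym_group_carrier permutes_swap_id)
  then have "transpose a k a \<in> {a, b} \<and> transpose a k b \<in> {a, b}"
  proof (rule generate_transpositions_induct[OF S, where P = "\<lambda>g. g a \<in> {a, b} \<and> g b \<in> {a, b}"])
    show "(x \<circ> y) a \<in> {a, b} \<and> (x \<circ> y) b \<in> {a, b}"
      if "x a \<in> {a, b} \<and> x b \<in> {a, b}" "y a \<in> {a, b} \<and> y b \<in> {a, b}" for x y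
      using that by auto
    show "t a \<in> {a, b} \<and> t b \<in> {a, b}" if "t \<in> S" for t using stable[OF that] .
  qed simp
  then show False using k by simp
qed

section \<open>Common neighbours in the Cayley graph\<close>

lemma cay_adj_iff:
  assumes "S \<subseteq> transpositions n"
  shows "cay_adj n S g h \<longleftrightarrow>
    g \<in> carrier (sym_group n) \<and> h \<in> carrier (sym_group n) \<and> (\<exists>s\<in>S. h = s \<circ> g)"
proof -
  have "g = s \<circ> h \<longleftrightarrow> h = s \<circ> g" if "s \<in> S" for s
    using transposition_comp_self[of s n] that assms by (auto simp flip: comp_assoc)
  then show ?thesis unfolding cay_adj_def sym_group_mult by blast
qed

lemma cay_adj_id_iff: "S \<subseteq> transpositions n \<Longrightarrow> cay_adj n S id h \<longleftrightarrow> h \<in> S"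
  using transpositions_subset_carrier id_in_sym_group by (auto simp: cay_adj_iff)

definition cay_common_nbrs :: "nat \<Rightarrow> (nat \<Rightarrow> nat) set \<Rightarrow> (nat \<Rightarrow> nat) \<Rightarrow> (nat \<Rightarrow> nat) \<Rightarrow> (nat \<Rightarrow> nat) set" where
  "cay_common_nbrs n S g h = {k. cay_adj n S g k \<and> cay_adj n S h k}"

lemma cay_common_nbrs_transpositions:
  assumes S: "S \<subseteq> transpositions n" and st: "s \<in> S" "t \<in> S" "s \<noteq> t"
  shows "cay_common_nbrs n S s t =
    {id} \<union> (if t \<circ> s \<circ> t \<in> S then {t \<circ> s} else {}) \<union> (if s \<circ> t \<circ> s \<in> S then {s \<circ> t} else {})"
proof -
  have T: "a \<in> transpositions n" if "a \<in> S" for a using S that by blast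
  have inv: "a \<circ> a = id" if "a \<in> S" for a using transposition_comp_self[OF T[OF that]] .
  have "k \<in> cay_common_nbrs n S s t \<longleftrightarrow> (\<exists>a\<in>S. \<exists>b\<in>S. k = a \<circ> s \<and> k = b \<circ> t)" for k
    using S st transpositions_subset_carrier sym_group_comp_closed
    by (auto simp: cay_common_nbrs_def cay_adj_iff) blast+
  also have "\<dots>k \<longleftrightarrow> k = id \<or> (k = t \<circ> s \<and> t \<circ> s \<circ> t \<in> S) \<or> (k = s \<circ> t \<and> s \<circ> t \<circ> s \<in> S)" for k
  proof
    assume "\<exists>a\<in>S. \<exists>b\<in>S. k = a \<circ> s \<and> k = b \<circ> t"
    then obtain a b where ab: "a \<in> S" "b \<in> S" "k = a \<circ> s" "k = b \<circ> t" by blast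
    then have b: "b = a \<circ> s \<circ> t" using inv[OF st(2)] by (metis comp_assoc comp_id)
    from transposition_comp_eq_cases[OF T[OF ab(1)] T[OF ab(2)] T[OF st(1)] T[OF st(2)] st(3)] ab
    consider "a = s" | "a = t" | "a = s \<circ> t \<circ> s" by blast
    then show "k = id \<or> (k = t \<circ> s \<and> t \<circ> s \<circ> t \<in> S) \<or> (k = s \<circ> t \<and> s \<circ> t \<circ> s \<in> S)"
    proof cases
      case 1 then show ?thesis using ab inv[OF st(1)] by simp
    next
      case 2 then show ?thesis using ab b by simp
    next
      case 3 then show ?thesis using ab inv[OF st(1)] by (simp add: comp_assoc)
    qed
  next
    assume "k = id \<or> (k = t \<circ> s \<and> t \<circ> s \<circ> t \<in> S) \<or> (k = s \<circ> t \<and> s \<circ> t \<circ> s \<in> S)"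
    then show "\<exists>a\<in>S. \<exists>b\<in>S. k = a \<circ> s \<and> k = b \<circ> t"
      using st inv[OF st(1)] inv[OF st(2)] by (auto simp: comp_assoc) (metis comp_assoc comp_id)+
  qed
  finally show ?thesis by auto
qed

lemma cay_common_nbrs_meeting:
  assumes S: "S \<subseteq> transpositions n" and st: "s \<in> S" "t \<in> S" "s \<noteq> t" "moved s \<inter> moved t \<noteq> {}"
  shows "cay_common_nbrs n S s t = (if s \<circ> t \<circ> s \<in> S then {id, t \<circ> s, s \<circ> t} else {id})"
    and "card (cay_common_nbrs n S s t) = (if s \<circ> t \<circ> s \<in> S then 3 else 1)"
proof -
  have T: "s \<in> transpositions n" "t \<in> transpositions n" using S st by auto
  note meet = transpositions_meeting[OF T st(3,4)]
  have "t \<circ> s \<noteq> id" "s \<circ> t \<noteq> id"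
    using transposition_comp_self[OF T(1)] transposition_comp_self[OF T(2)] st(3)
    by (metis comp_assoc comp_id id_comp)+
  then show "cay_common_nbrs n S s t = (if s \<circ> t \<circ> s \<in> S then {id, t \<circ> s, s \<circ> t} else {id})"
    and "card (cay_common_nbrs n S s t) = (if s \<circ> t \<circ> s \<in> S then 3 else 1)"
    using cay_common_nbrs_transpositions[OF S st(1-3)] meet(1,2) by auto
qed

lemma moved_Int_empty_iff_card_cay_common_nbrs:
  assumes S: "S \<subseteq> transpositions n" and st: "s \<in> S" "t \<in> S"
  shows "moved s \<inter> moved t = {} \<longleftrightarrow> s \<noteq> t \<and> card (cay_common_nbrs n S s t) = 2"
proof (cases "s = t")
  case True
  then show ?thesis using card_moved_transposition[of s n] S st by auto
next
  case False
  have T: "s \<in> transpositions n" "t \<in> transpositions n" using S st by auto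
  show ?thesis
  proof (cases "moved s \<inter> moved t = {}")
    case True
    have comm: "s \<circ> t = t \<circ> s" using transpositions_disjoint_commute[OF T True] .
    then have "t \<circ> s \<circ> t = s" "s \<circ> t \<circ> s = t" "t \<circ> s \<noteq> id"
      using transposition_comp_self[OF T(1)] transposition_comp_self[OF T(2)] False
      by (metis comp_assoc comp_id id_comp)+
    then have "cay_common_nbrs n S s t = {id, t \<circ> s}"
      using cay_common_nbrs_transpositions[OF S st False] comm st by auto
    then show ?thesis using True False \<open>t \<circ> s \<noteq> id\<close> by simp
  next
    case meeting: False
    then show ?thesis using cay_common_nbrs_meeting(2)[OF S st False meeting] by simp
  qed
qed

lemma moved_Int3_empty_iff_cay_common_nbrs:
  assumes S: "S \<subseteq> transpositions n" and stu: "s \<in> S" "t \<in> S" "u \<in> S" "s \<noteq> t" "s \<noteq> u" "t \<noteq> u"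
    and meeting: "moved s \<inter> moved t \<noteq> {}" "moved s \<inter> moved u \<noteq> {}" "moved t \<inter> moved u \<noteq> {}"
  shows "moved s \<inter> moved t \<inter> moved u = {} \<longleftrightarrow>
    card (cay_common_nbrs n S s t) = 3 \<and> cay_common_nbrs n S s t = cay_common_nbrs n S s u"
proof -
  have T: "s \<in> transpositions n" "t \<in> transpositions n" "u \<in> transpositions n" using S stu by auto
  note meet_st = transpositions_meeting[OF T(1,2) stu(4) meeting(1)]
  have ss: "s \<circ> s = id" using transposition_comp_self[OF T(1)] .
  have ss': "s \<circ> (s \<circ> f) = f" for f :: "nat \<Rightarrow> nat" using ss by (metis comp_assoc id_comp)
  have "moved s \<inter> moved t \<inter> moved u = {} \<longleftrightarrow> moved u = sym_diff (moved s) (moved t)"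
    by (rule card_2_Int3_empty_iff_triangle) (use card_moved_transposition T stu meeting
        inj_on_moved_transpositions[THEN inj_onD] in auto)
  also have "\<dots> \<longleftrightarrow> u = s \<circ> t \<circ> s"
    using meet_st(3,4) T(3) inj_on_moved_transpositions[THEN inj_onD] by metis
  also have "\<dots> \<longleftrightarrow> card (cay_common_nbrs n S s t) = 3 \<and> cay_common_nbrs n S s t = cay_common_nbrs n S s u"
  proof
    assume u: "u = s \<circ> t \<circ> s"
    then have "u \<circ> s = s \<circ> t" "s \<circ> u = t \<circ> s" "s \<circ> u \<circ> s = t"
      using ss ss' by (simp_all add: comp_assoc)
    then show "card (cay_common_nbrs n S s t) = 3 \<and> cay_common_nbrs n S s t = cay_common_nbrs n S s u"
      using cay_common_nbrs_meeting[OF S stu(1,2,4) meeting(1)] cay_common_nbrs_meeting[OF S stu(1,3,5) meeting(2)]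
        u stu by auto
  next
    assume cn: "card (cay_common_nbrs n S s t) = 3 \<and> cay_common_nbrs n S s t = cay_common_nbrs n S s u"
    then have "s \<circ> t \<circ> s \<in> S" using cay_common_nbrs_meeting(2)[OF S stu(1,2,4) meeting(1)] by (auto split: if_splits)
    then have "s \<circ> t \<in> cay_common_nbrs n S s u"
      using cn cay_common_nbrs_meeting(1)[OF S stu(1,2,4) meeting(1)] by auto
    moreover have "s \<circ> t \<noteq> id" using ss' stu(4) by (metis comp_id)
    ultimately have "s \<circ> t = u \<circ> s \<or> s \<circ> t = s \<circ> u"
      using cay_common_nbrs_meeting(1)[OF S stu(1,3,5) meeting(2)] by (auto split: if_splits)
    then show "u = s \<circ> t \<circ> s"
      using ss ss' stu(6) by (metis comp_assoc comp_id)
  qed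
  finally show ?thesis .
qed

section \<open>Automorphisms of the Cayley graph fixing the identity\<close>

lemma cay_autD:
  assumes "\<phi> \<in> cay_aut n S"
  shows "bij_betw \<phi> (carrier (sym_group n)) (carrier (sym_group n))"
    and "\<lbrakk>g \<in> carrier (sym_group n); h \<in> carrier (sym_group n)\<rbrakk> \<Longrightarrow> cay_adj n S g h \<longleftrightarrow> cay_adj n S (\<phi> g) (\<phi> h)"
  using assms by (auto simp: cay_aut_def BijGroup_def Bij_def)

lemma cay_common_nbrs_subset: "cay_common_nbrs n S g h \<subseteq> carrier (sym_group n)"
  by (auto simp: cay_common_nbrs_def cay_adj_def)

lemma cay_aut_image_common_nbrs:
  assumes \<phi>: "\<phi> \<in> cay_aut n S" and gh: "g \<in> carrier (sym_group n)" "h \<in> carrier (sym_group n)"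
  shows "\<phi> ` cay_common_nbrs n S g h = cay_common_nbrs n S (\<phi> g) (\<phi> h)"
proof
  note adj = cay_autD(2)[OF \<phi>]
  show "\<phi> ` cay_common_nbrs n S g h \<subseteq> cay_common_nbrs n S (\<phi> g) (\<phi> h)"
  proof
    fix k assume "k \<in> \<phi> ` cay_common_nbrs n S g h"
    then obtain k0 where k0: "k0 \<in> cay_common_nbrs n S g h" "k = \<phi> k0" by blast
    have "k0 \<in> carrier (sym_group n)" using k0(1) cay_common_nbrs_subset by blast
    then show "k \<in> cay_common_nbrs n S (\<phi> g) (\<phi> h)"
      using k0 adj[OF gh(1)] adj[OF gh(2)] by (simp add: cay_common_nbrs_def)
  qed
  show "cay_common_nbrs n S (\<phi> g) (\<phi> h) \<subseteq> \<phi> ` cay_common_nbrs n S g h"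
  proof
    fix k assume k: "k \<in> cay_common_nbrs n S (\<phi> g) (\<phi> h)"
    then have "k \<in> \<phi> ` carrier (sym_group n)"
      using cay_common_nbrs_subset[of n S "\<phi> g" "\<phi> h"] k cay_autD(1)[OF \<phi>] by (auto simp: bij_betw_def)
    then obtain k0 where k0: "k0 \<in> carrier (sym_group n)" "k = \<phi> k0" by blast
    then have "k0 \<in> cay_common_nbrs n S g h"
      using k adj[OF gh(1)] adj[OF gh(2)] by (simp add: cay_common_nbrs_def)
    then show "k \<in> \<phi> ` cay_common_nbrs n S g h" using k0(2) by blast
  qed
qed

lemma cay_stab_bij_generators:
  assumes S: "S \<subseteq> transpositions n" and \<phi>: "\<phi> \<in> cay_stab n S"
  shows "bij_betw \<phi> S S"
proof -
  have aut: "\<phi> \<in> cay_aut n S" and e: "\<phi> id = id" using \<phi> by (auto simp: cay_stab_def sym_group_one)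
  note bij = cay_autD(1)[OF aut]
  have SC: "S \<subseteq> carrier (sym_group n)" using S transpositions_subset_carrier by blast
  have S_iff: "h \<in> S \<longleftrightarrow> \<phi> h \<in> S" if "h \<in> carrier (sym_group n)" for h
    using cay_autD(2)[OF aut id_in_sym_group that] e cay_adj_id_iff[OF S] by simp
  have "\<phi> ` S = S"
  proof
    show "\<phi> ` S \<subseteq> S" using S_iff SC by blast
    show "S \<subseteq> \<phi> ` S"
    proof
      fix s assume s: "s \<in> S"
      then obtain h where "h \<in> carrier (sym_group n)" "s = \<phi> h" using SC bij by (auto simp: bij_betw_def)
      then show "s \<in> \<phi> ` S" using S_iff s by blast
    qed
  qed
  moreover have "inj_on \<phi> S" using bij SC by (auto simp: bij_betw_def intro: inj_on_subset)
  ultimately show ?thesis by (simp add: bij_betw_def)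
qed

lemma cay_stab_common_nbrs:
  assumes S: "S \<subseteq> transpositions n" and \<phi>: "\<phi> \<in> cay_stab n S" and xyz: "x \<in> S" "y \<in> S" "z \<in> S"
  shows "card (cay_common_nbrs n S (\<phi> x) (\<phi> y)) = card (cay_common_nbrs n S x y)"
    and "cay_common_nbrs n S (\<phi> x) (\<phi> y) = cay_common_nbrs n S (\<phi> x) (\<phi> z) \<longleftrightarrow>
      cay_common_nbrs n S x y = cay_common_nbrs n S x z"
proof -
  have aut: "\<phi> \<in> cay_aut n S" using \<phi> by (simp add: cay_stab_def)
  have C: "x \<in> carrier (sym_group n)" "y \<in> carrier (sym_group n)" "z \<in> carrier (sym_group n)"
    using S xyz transpositions_subset_carrier by blast+
  have inj: "inj_on \<phi> (carrier (sym_group n))" using cay_autD(1)[OF aut] by (simp add: bij_betw_def)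
  note image = cay_aut_image_common_nbrs[OF aut]
  show "card (cay_common_nbrs n S (\<phi> x) (\<phi> y)) = card (cay_common_nbrs n S x y)"
    using image[OF C(1,2)] card_image[OF inj_on_subset[OF inj cay_common_nbrs_subset]] by metis
  show "cay_common_nbrs n S (\<phi> x) (\<phi> y) = cay_common_nbrs n S (\<phi> x) (\<phi> z) \<longleftrightarrow>
      cay_common_nbrs n S x y = cay_common_nbrs n S x z"
    using image[OF C(1,2)] image[OF C(1,3)]
      inj_on_image_eq_iff[OF inj cay_common_nbrs_subset cay_common_nbrs_subset] by metis
qed

lemma cay_stab_preserves_Int_moved:
  assumes S: "S \<subseteq> transpositions n" and \<phi>: "\<phi> \<in> cay_stab n S" and st: "s \<in> S" "t \<in> S"
  shows "moved s \<inter> moved t = {} \<longleftrightarrow> moved (\<phi> s) \<inter> moved (\<phi> t) = {}"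
proof -
  note bij = cay_stab_bij_generators[OF S \<phi>]
  have "\<phi> s = \<phi> t \<longleftrightarrow> s = t" using inj_on_eq_iff[OF bij_betw_imp_inj_on[OF bij] st] .
  then show ?thesis
    using moved_Int_empty_iff_card_cay_common_nbrs[OF S] bij_betw_apply[OF bij] st
      cay_stab_common_nbrs(1)[OF S \<phi> st st(1)] by simp
qed

lemma cay_stab_preserves_Int3_moved:
  assumes S: "S \<subseteq> transpositions n" and \<phi>: "\<phi> \<in> cay_stab n S" and stu: "s \<in> S" "t \<in> S" "u \<in> S"
  shows "moved s \<inter> moved t \<inter> moved u = {} \<longleftrightarrow> moved (\<phi> s) \<inter> moved (\<phi> t) \<inter> moved (\<phi> u) = {}"
proof -
  let ?CN = "cay_common_nbrs n S"
  note bij = cay_stab_bij_generators[OF S \<phi>]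
  note pair = cay_stab_preserves_Int_moved[OF S \<phi>]
  have eq_iff: "\<phi> x = \<phi> y \<longleftrightarrow> x = y" if "x \<in> S" "y \<in> S" for x y
    using inj_on_eq_iff[OF bij_betw_imp_inj_on[OF bij] that] .
  show ?thesis
  proof (cases "s = t \<or> s = u \<or> t = u")
    case True
    then show ?thesis using pair stu by (auto simp: Int_ac)
  next
    case distinct: False
    show ?thesis
    proof (cases "moved s \<inter> moved t \<noteq> {} \<and> moved s \<inter> moved u \<noteq> {} \<and> moved t \<inter> moved u \<noteq> {}")
      case True
      have "moved s \<inter> moved t \<inter> moved u = {} \<longleftrightarrow> card (?CN s t) = 3 \<and> ?CN s t = ?CN s u"
        using moved_Int3_empty_iff_cay_common_nbrs[OF S stu] distinct True by blast
      also have "\<dots> \<longleftrightarrow> card (?CN (\<phi> s) (\<phi> t)) = 3 \<and> ?CN (\<phi> s) (\<phi> t) = ?CN (\<phi> s) (\<phi> u)"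
        using cay_stab_common_nbrs[OF S \<phi> stu] by simp
      also have "\<dots> \<longleftrightarrow> moved (\<phi> s) \<inter> moved (\<phi> t) \<inter> moved (\<phi> u) = {}"
        using moved_Int3_empty_iff_cay_common_nbrs[OF S bij_betw_apply[OF bij stu(1)]
            bij_betw_apply[OF bij stu(2)] bij_betw_apply[OF bij stu(3)]]
          distinct True eq_iff pair stu by auto
      finally show ?thesis .
    next
      case False
      then show ?thesis using pair[of s t] pair[of s u] pair[of t u] stu by blast
    qed
  qed
qed

lemma cay_stab_induced_by_vertex_bij:
  assumes n: "n \<ge> 3" and S: "S \<subseteq> transpositions n"
    and gen: "generate (sym_group n) S = carrier (sym_group n)" and \<phi>: "\<phi> \<in> cay_stab n S"
  shows "\<exists>\<sigma>. bij_betw \<sigma> {1..n} {1..n} \<and> (\<forall>s\<in>S. moved (\<phi> s) = \<sigma> ` moved s)"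
proof -
  have inj_moved: "inj_on moved S" using inj_on_subset[OF inj_on_moved_transpositions S] .
  have moved_inv: "inv_into S moved (moved s) = s" if "s \<in> S" for s using inv_into_f_f[OF inj_moved that] .
  interpret star_preserving_edge_bij "{1..n}" "moved ` S" "\<lambda>e. moved (\<phi> (inv_into S moved e))"
  proof
    show "card e = 2" "e \<subseteq> {1..n}" if "e \<in> moved ` S" for e
      using that S card_moved_transposition moved_transposition_subset by blast+
    show "\<exists>e\<in>moved ` S. v \<in> e" if "v \<in> {1..n}" for v
      using generating_transpositions_cover[OF S gen _ that] n by auto
    show "\<exists>e'\<in>moved ` S. e' \<noteq> e \<and> e \<inter> e' \<noteq> {}" if "e \<in> moved ` S" for e
    proof -
      obtain s where s: "s \<in> S" "e = moved s" using \<open>e \<in> moved ` S\<close> by blast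
      obtain t where t: "t \<in> S" "t \<noteq> s" "moved s \<inter> moved t \<noteq> {}"
        using generating_transpositions_no_isolated[OF S gen n s(1)] by blast
      have "moved t \<noteq> moved s" using inj_moved s(1) t(1,2) by (auto dest: inj_onD)
      then show ?thesis using s t by blast
    qed
    have "bij_betw (moved \<circ> \<phi> \<circ> inv_into S moved) (moved ` S) (moved ` S)"
      using bij_betw_inv_into[OF inj_on_imp_bij_betw[OF inj_moved]] cay_stab_bij_generators[OF S \<phi>]
        inj_on_imp_bij_betw[OF inj_moved]
      by (auto intro: bij_betw_trans)
    then show "bij_betw (\<lambda>e. moved (\<phi> (inv_into S moved e))) (moved ` S) (moved ` S)" by (simp add: comp_def)
    show "e1 \<inter> e2 \<inter> e3 = {} \<longleftrightarrow>
        moved (\<phi> (inv_into S moved e1)) \<inter> moved (\<phi> (inv_into S moved e2)) \<inter> moved (\<phi> (inv_into S moved e3)) = {}"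
      if "e1 \<in> moved ` S" "e2 \<in> moved ` S" "e3 \<in> moved ` S" for e1 e2 e3
      using that cay_stab_preserves_Int3_moved[OF S \<phi>] moved_inv by (elim imageE) simp
  qed
  show ?thesis using induced_by_vertex_bij moved_inv by auto
qed

lemma cay_stab_induced_by_perm:
  assumes n: "n \<ge> 3" and S: "S \<subseteq> transpositions n"
    and gen: "generate (sym_group n) S = carrier (sym_group n)" and \<phi>: "\<phi> \<in> cay_stab n S"
  shows "\<exists>\<sigma>. \<sigma> permutes {1..n} \<and> (\<forall>s\<in>S. \<phi> s = \<sigma> \<circ> s \<circ> inv' \<sigma>)"
proof -
  obtain \<sigma>0 where \<sigma>0: "bij_betw \<sigma>0 {1..n} {1..n}" "\<forall>s\<in>S. moved (\<phi> s) = \<sigma>0 ` moved s"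
    using cay_stab_induced_by_vertex_bij[OF assms] by blast
  define \<sigma> where "\<sigma> = restrict_id \<sigma>0 {1..n}"
  have \<sigma>: "\<sigma> permutes {1..n}" unfolding \<sigma>_def by (rule permutes_restrict_id[OF \<sigma>0(1)])
  have "\<phi> s = \<sigma> \<circ> s \<circ> inv' \<sigma>" if s: "s \<in> S" for s
  proof -
    obtain a b where ab: "a \<in> {1..n}" "b \<in> {1..n}" "a \<noteq> b" "s = transpose a b"
      using subsetD[OF S s] by (rule transpositionsE)
    obtain c d where cd: "c \<noteq> d" "\<phi> s = transpose c d"
      using subsetD[OF S bij_betw_apply[OF cay_stab_bij_generators[OF S \<phi>] s]] by (rule transpositionsE)
    have "{c, d} = \<sigma>0 ` {a, b}" using \<sigma>0(2) s ab cd by (metis moved_transpose)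
    then have "{c, d} = {\<sigma> a, \<sigma> b}" using ab by (simp add: \<sigma>_def)
    then show ?thesis
      using bij_conj_transpose[OF permutes_bij[OF \<sigma>]] ab cd transpose_eq_if_doubleton_eq by metis
  qed
  then show ?thesis using \<sigma> by blast
qed

lemma aut_SnS_subset_cay_stab:
  assumes S: "S \<subseteq> transpositions n"
  shows "aut_SnS n S \<subseteq> cay_stab n S"
proof
  let ?C = "carrier (sym_group n)"
  fix \<psi> assume \<psi>: "\<psi> \<in> aut_SnS n S"
  then have hom: "\<psi> \<in> hom (sym_group n) (sym_group n)" and B: "\<psi> \<in> Bij ?C" and SS: "\<psi> ` S = S"
    by (auto simp: aut_SnS_def auto_def)
  have SC: "S \<subseteq> ?C" using S transpositions_subset_carrier by blast
  have into: "\<psi> g \<in> ?C" if "g \<in> ?C" for g using B Bij_imp_funcset that by blast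
  have mult: "\<psi> (x \<circ> y) = \<psi> x \<circ> \<psi> y" if "x \<in> ?C" "y \<in> ?C" for x y
    using hom_mult[OF hom that] by (simp add: sym_group_mult)
  have inj: "inj_on \<psi> ?C" using B by (simp add: Bij_def bij_betw_def)
  have adj: "cay_adj n S g h \<longleftrightarrow> cay_adj n S (\<psi> g) (\<psi> h)" if gh: "g \<in> ?C" "h \<in> ?C" for g h
  proof -
    have "h = s \<circ> g \<longleftrightarrow> \<psi> h = \<psi> s \<circ> \<psi> g" if "s \<in> S" for s
    proof -
      have "s \<circ> g \<in> ?C" using sym_group_comp_closed SC that gh(1) by blast
      then show ?thesis using inj_on_eq_iff[OF inj gh(2)] mult[OF subsetD[OF SC that] gh(1)] by metis
    qed
    then have "(\<exists>s\<in>S. h = s \<circ> g) \<longleftrightarrow> (\<exists>s\<in>\<psi> ` S. \<psi> h = s \<circ> \<psi> g)" by blast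
    then show ?thesis using gh into SS by (simp add: cay_adj_iff[OF S])
  qed
  have "\<psi> id = id"
    using hom_one[OF hom sym_group_is_group sym_group_is_group] by (simp add: sym_group_one)
  then show "\<psi> \<in> cay_stab n S"
    using B adj by (simp add: cay_stab_def cay_aut_def BijGroup_def sym_group_one)
qed

lemma cay_stab_agrees_with_aut_SnS:
  assumes n: "n \<ge> 3" and S: "S \<subseteq> transpositions n"
    and gen: "generate (sym_group n) S = carrier (sym_group n)" and \<phi>: "\<phi> \<in> cay_stab n S"
  shows "\<exists>\<psi>\<in>aut_SnS n S. \<forall>s\<in>S. \<psi> s = \<phi> s"
proof -
  let ?C = "carrier (sym_group n)"
  obtain \<sigma> where \<sigma>: "\<sigma> permutes {1..n}" and conj: "\<forall>s\<in>S. \<phi> s = \<sigma> \<circ> s \<circ> inv' \<sigma>"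
    using cay_stab_induced_by_perm[OF assms] by blast
  have \<sigma>C: "\<sigma> \<in> ?C" using \<sigma> by (simp add: sym_group_carrier)
  define \<psi> where "\<psi> = (\<lambda>g\<in>?C. \<sigma> \<otimes>\<^bsub>sym_group n\<^esub> g \<otimes>\<^bsub>sym_group n\<^esub> inv\<^bsub>sym_group n\<^esub> \<sigma>)"
  have agree: "\<psi> s = \<phi> s" if "s \<in> S" for s
    using conj that \<sigma>C S transpositions_subset_carrier by (auto simp: \<psi>_def sym_group_mult)
  then have "\<psi> ` S = S" using bij_betw_imp_surj_on[OF cay_stab_bij_generators[OF S \<phi>]] by auto
  moreover have "\<psi> \<in> auto (sym_group n)"
    unfolding \<psi>_def by (rule group.conjugation_in_auto[OF sym_group_is_group \<sigma>C])
  ultimately show ?thesis using agree unfolding aut_SnS_def by blast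
qed

lemma aut_SnS_fixing_generators:
  assumes S: "S \<subseteq> transpositions n" and gen: "generate (sym_group n) S = carrier (sym_group n)"
    and \<psi>: "\<psi> \<in> aut_SnS n S" and fix_S: "\<forall>s\<in>S. \<psi> s = s"
  shows "\<psi> = \<one>\<^bsub>BijGroup (carrier (sym_group n))\<^esub>"
proof -
  let ?C = "carrier (sym_group n)"
  have hom: "\<psi> \<in> hom (sym_group n) (sym_group n)" and B: "\<psi> \<in> Bij ?C"
    using \<psi> by (auto simp: aut_SnS_def auto_def)
  have "g \<in> ?C \<and> \<psi> g = g" if "g \<in> ?C" for g
  proof -
    have "g \<in> generate (sym_group n) S" using that gen by simp
    then show ?thesis
    proof (rule generate_transpositions_induct[OF S, where P = "\<lambda>g. g \<in> ?C \<and> \<psi> g = g"])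
      show "id \<in> ?C \<and> \<psi> id = id"
        using hom_one[OF hom sym_group_is_group sym_group_is_group] id_in_sym_group by (simp add: sym_group_one)
      show "s \<in> ?C \<and> \<psi> s = s" if "s \<in> S" for s
        using that fix_S S transpositions_subset_carrier by blast
      show "x \<circ> y \<in> ?C \<and> \<psi> (x \<circ> y) = x \<circ> y" if "x \<in> ?C \<and> \<psi> x = x" "y \<in> ?C \<and> \<psi> y = y" for x y
        using that hom_mult[OF hom] sym_group_comp_closed by (simp add: sym_group_mult)
    qed
  qed
  then have "\<psi> = (\<lambda>x\<in>?C. x)"
    by (intro extensionalityI[OF Bij_imp_extensional[OF B] restrict_extensional]) simp
  then show ?thesis by (simp add: BijGroup_def)
qed

section \<open>The decomposition of the vertex stabiliser\<close>

lemma subgroup_cay_aut: "subgroup (cay_aut n S) (BijGroup (carrier (sym_group n)))"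
  using subgroup_BijGroup_preserving[of "carrier (sym_group n)" "cay_adj n S"]
  by (simp add: cay_aut_def BijGroup_def)

lemma subgroup_cay_stab: "subgroup (cay_stab n S) (BijGroup (carrier (sym_group n)))"
proof -
  have "cay_stab n S = {\<phi> \<in> cay_aut n S. \<forall>x\<in>{id}. \<phi> x = x}" by (simp add: cay_stab_def sym_group_one)
  then show ?thesis
    by (simp only:) (rule subgroup_BijGroup_pointwise_stabiliser[OF subgroup_cay_aut], simp add: id_in_sym_group)
qed

lemma cay_L_eq_pointwise_stabiliser:
  "S \<subseteq> transpositions n \<Longrightarrow> cay_L n S = {\<phi> \<in> cay_stab n S. \<forall>s\<in>S. \<phi> s = s}"
  by (auto simp: cay_L_def sym_group_one cay_adj_id_iff)

lemma subgroup_cay_L: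
  "S \<subseteq> transpositions n \<Longrightarrow> subgroup (cay_L n S) (BijGroup (carrier (sym_group n)))"
  unfolding cay_L_eq_pointwise_stabiliser
  by (rule subgroup_BijGroup_pointwise_stabiliser[OF subgroup_cay_stab]) (use transpositions_subset_carrier in blast)

lemma cay_L_normal:
  assumes "S \<subseteq> transpositions n"
  shows "cay_L n S \<lhd> BijGroup (carrier (sym_group n))\<lparr>carrier := cay_stab n S\<rparr>"
  unfolding cay_L_eq_pointwise_stabiliser[OF assms]
proof (rule normal_pointwise_stabiliser[OF subgroup_cay_stab])
  show "S \<subseteq> carrier (sym_group n)" using assms transpositions_subset_carrier by blast
  show "\<phi> ` S \<subseteq> S" if "\<phi> \<in> cay_stab n S" for \<phi>
    using bij_betw_imp_surj_on[OF cay_stab_bij_generators[OF assms that]] by simp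
qed

lemma cay_L_set_mult_aut_SnS:
  assumes n: "n \<ge> 3" and S: "S \<subseteq> transpositions n"
    and gen: "generate (sym_group n) S = carrier (sym_group n)"
  shows "cay_L n S <#>\<^bsub>BijGroup (carrier (sym_group n))\<^esub> aut_SnS n S = cay_stab n S"
proof
  let ?B = "BijGroup (carrier (sym_group n))"
  interpret B: group ?B by (rule group_BijGroup)
  have L_stab: "cay_L n S \<subseteq> cay_stab n S" by (auto simp: cay_L_def)
  show "cay_L n S <#>\<^bsub>?B\<^esub> aut_SnS n S \<subseteq> cay_stab n S"
    using subgroup.m_closed[OF subgroup_cay_stab] L_stab aut_SnS_subset_cay_stab[OF S]
    by (auto simp: set_mult_def) blast
  show "cay_stab n S \<subseteq> cay_L n S <#>\<^bsub>?B\<^esub> aut_SnS n S"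
  proof
    fix \<phi> assume \<phi>: "\<phi> \<in> cay_stab n S"
    obtain \<psi> where \<psi>: "\<psi> \<in> aut_SnS n S" and agree: "\<forall>s\<in>S. \<psi> s = \<phi> s"
      using cay_stab_agrees_with_aut_SnS[OF n S gen \<phi>] by blast
    have \<psi>_stab: "\<psi> \<in> cay_stab n S" using aut_SnS_subset_cay_stab[OF S] \<psi> by blast
    have carrier: "\<phi> \<in> carrier ?B" "\<psi> \<in> carrier ?B"
      using subgroup.subset[OF subgroup_cay_stab] \<phi> \<psi>_stab by auto
    define l where "l = \<phi> \<otimes>\<^bsub>?B\<^esub> inv\<^bsub>?B\<^esub> \<psi>"
    have "l \<in> cay_stab n S"
      unfolding l_def using subgroup.m_closed[OF subgroup_cay_stab \<phi> subgroup.m_inv_closed[OF subgroup_cay_stab \<psi>_stab]] .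
    moreover have "l s = s" if "s \<in> S" for s
      unfolding l_def
      by (rule BijGroup_mult_inv_fixes)
        (use carrier agree that S transpositions_subset_carrier
          bij_betw_imp_surj_on[OF cay_stab_bij_generators[OF S \<psi>_stab]] in \<open>auto simp: BijGroup_def\<close>)
    ultimately have "l \<in> cay_L n S" by (simp add: cay_L_eq_pointwise_stabiliser[OF S])
    moreover have "\<phi> = l \<otimes>\<^bsub>?B\<^esub> \<psi>" using carrier by (simp add: l_def B.m_assoc)
    ultimately show "\<phi> \<in> cay_L n S <#>\<^bsub>?B\<^esub> aut_SnS n S" using \<psi> by (auto simp: set_mult_def)
  qed
qed

lemma cay_L_Int_aut_SnS:
  assumes S: "S \<subseteq> transpositions n" and gen: "generate (sym_group n) S = carrier (sym_group n)"
  shows "cay_L n S \<inter> aut_SnS n S = {\<one>\<^bsub>BijGroup (carrier (sym_group n))\<^esub>}"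
proof
  show "cay_L n S \<inter> aut_SnS n S \<subseteq> {\<one>\<^bsub>BijGroup (carrier (sym_group n))\<^esub>}"
    using aut_SnS_fixing_generators[OF S gen] by (auto simp: cay_L_eq_pointwise_stabiliser[OF S])
  have "(\<lambda>x\<in>carrier (sym_group n). x) ` S = S" using S transpositions_subset_carrier by auto
  then have "\<one>\<^bsub>BijGroup (carrier (sym_group n))\<^esub> \<in> aut_SnS n S"
    using group.id_in_auto[OF sym_group_is_group] by (simp add: aut_SnS_def BijGroup_def)
  then show "{\<one>\<^bsub>BijGroup (carrier (sym_group n))\<^esub>} \<subseteq> cay_L n S \<inter> aut_SnS n S"
    using subgroup.one_closed[OF subgroup_cay_L[OF S]] by blast
qed

theorem proposition7:
  fixes n :: nat and S :: "(nat \<Rightarrow> nat) set"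
  assumes "n \<ge> 5"
    and "S \<subseteq> transpositions n"
    and "generate (sym_group n) S = carrier (sym_group n)"
  shows "cay_L n S \<lhd> (BijGroup (carrier (sym_group n))) \<lparr>carrier := cay_stab n S\<rparr>
       \<and> cay_L n S <#>\<^bsub>BijGroup (carrier (sym_group n))\<^esub> aut_SnS n S = cay_stab n S
       \<and> cay_L n S \<inter> aut_SnS n S = {\<one>\<^bsub>BijGroup (carrier (sym_group n))\<^esub>}"
  using cay_L_normal[OF assms(2)] cay_L_set_mult_aut_SnS[OF _ assms(2,3)] cay_L_Int_aut_SnS[OF assms(2,3)] assms(1)
  by simp

end
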